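(* Let $(n_j)_{j\in\mathbb N}$ be a strictly increasing sequence of positive integers and $\omega\in\Sigma$. If $\lim_{j\to\infty}A_{n_j}g(\omega)=0$ and $\lim_{j\to\infty}A_{n_j}f(\omega)$ exists, then $\lim_{j\to\infty}A_{n_j}f(\omega)\in A$. In particular, if $\lim_{n\to\infty}A_ng(\omega)=0$ and $\lim_{n\to\infty}A_nf(\omega)$ exists, then $\lim_{n\to\infty}A_nf(\omega)\in A$.
   Context: Let $T_1,\dots,T_m:[0,1]\to[0,1]$ be $C^1$ maps with $T_i'>0$, $T_i((0,1))\cap T_j((0,1))=\emptyset$ for $i\ne j$, and $\operatorname{diam}(T_{i_1}\circ\cdots\circ T_{i_n}([0,1]))\to0$ uniformly. $\Sigma=\{1,\dots,m\}^{\mathbb N}$ with shift $\sigma$, $\Pi(\omega)=\lim_nT_{\omega_1}\circ\cdots\circ T_{\omega_n}(0)$. Each $T_i$ fixes $x_i=\Pi(i,i,i,\dots)$, with $T_i'(x_i)\le1$ and $0<T_i'(x)<1$ for $x\ne x_i$; $\mathcal I=\{i:T_i'(x_i)=1\}$ is nonempty. $g(\omega)=-\log T'_{\omega_1}(\Pi(\sigma\omega))$, $f:\Sigma\to\mathbb R$ continuous, $A_nF=\frac1n\sum_{i=0}^{n-1}F\circ\sigma^i$, and $A=[\min_{i\in\mathcal I}f(i,i,\dots),\max_{i\in\mathcal I}f(i,i,\dots)]$. *)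

theory Defs
  imports "HOL-Analysis.Analysis"
begin

text \<open>Symbolic space: sequences with letters in {1..m}; index 0 is the first letter.
  The type nat => nat carries the product topology (Function_Topology), so
  continuity on this set is continuity on Sigma.\<close>
definition Sigma_m :: "nat \<Rightarrow> (nat \<Rightarrow> nat) set" where
  "Sigma_m m = {\<omega>. \<forall>k. \<omega> k \<in> {1..m}}"

definition shift :: "(nat \<Rightarrow> nat) \<Rightarrow> (nat \<Rightarrow> nat)" where
  "shift \<omega> = (\<lambda>k. \<omega> (Suc k))"

definition comp_word :: "(nat \<Rightarrow> real \<Rightarrow> real) \<Rightarrow> (nat \<Rightarrow> nat) \<Rightarrow> nat \<Rightarrow> real \<Rightarrow> real" where
  "comp_word T \<omega> n = foldr (\<circ>) (map (\<lambda>k. T (\<omega> k)) [0..<n]) id"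

definition coding :: "(nat \<Rightarrow> real \<Rightarrow> real) \<Rightarrow> (nat \<Rightarrow> nat) \<Rightarrow> real" where
  "coding T \<omega> = lim (\<lambda>n. comp_word T \<omega> n 0)"

definition geom_pot :: "(nat \<Rightarrow> real \<Rightarrow> real) \<Rightarrow> (nat \<Rightarrow> real \<Rightarrow> real) \<Rightarrow> (nat \<Rightarrow> nat) \<Rightarrow> real" where
  "geom_pot T T' \<omega> = - ln (T' (\<omega> 0) (coding T (shift \<omega>)))"

definition birkhoff_avg :: "nat \<Rightarrow> ((nat \<Rightarrow> nat) \<Rightarrow> real) \<Rightarrow> (nat \<Rightarrow> nat) \<Rightarrow> real" where
  "birkhoff_avg n F \<omega> = (1 / real n) * (\<Sum>i<n. F ((shift ^^ i) \<omega>))"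

definition const_word :: "nat \<Rightarrow> (nat \<Rightarrow> nat)" where
  "const_word i = (\<lambda>_. i)"

end

theory Submission
  imports Defs
begin

text \<open>Since \<open>T_i' \<le> 1\<close>, the potential \<open>g\<close> is nonnegative and continuous on the compact
  space \<open>\<Sigma>\<close>, and it vanishes only at the constant words \<open>i^\<infinity>\<close> with \<open>i\<close> indifferent:
  \<open>g(\<omega>) = 0\<close> forces \<open>\<Pi>(\<sigma>\<omega>) = x_{\<omega>_1}\<close>, and because the images \<open>T_j((0,1))\<close> are disjoint the
  only coding of a fixed point \<open>x_i\<close> is \<open>i^\<infinity>\<close>. Hence for every \<open>\<epsilon> > 0\<close> there is \<open>C\<close> with
  \<open>f \<le> max f(i^\<infinity>) + \<epsilon> + C g\<close> on \<open>\<Sigma>\<close> (by compactness, \<open>g\<close> is bounded away from \<open>0\<close> where \<open>f\<close> is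
  large), and similarly from below. Averaging along the orbit of \<open>\<omega>\<close> and letting
  \<open>A_{n_j} g(\<omega>) \<rightarrow> 0\<close> confines the limit of \<open>A_{n_j} f(\<omega>)\<close> to \<open>[min, max]\<close> up to \<open>\<epsilon>\<close>.\<close>

lemma comp_word_Suc: "comp_word T \<eta> (Suc n) = T (\<eta> 0) \<circ> comp_word T (shift \<eta>) n"
proof -
  have "[0..<Suc n] = 0 # map Suc [0..<n]"
    by (simp add: map_Suc_upt upt_conv_Cons)
  then show ?thesis
    by (simp add: comp_word_def shift_def comp_def)
qed

lemma comp_word_cong:
  assumes "\<And>k. k < n \<Longrightarrow> \<eta> k = \<zeta> k"
  shows "comp_word T \<eta> n = comp_word T \<zeta> n"
  unfolding comp_word_def using assms by (intro arg_cong[where f = "\<lambda>xs. foldr (\<circ>) xs id"]) auto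

lemma funpow_shift: "(shift ^^ k) \<eta> = (\<lambda>j. \<eta> (j + k))"
  by (induction k arbitrary: \<eta>) (auto simp: shift_def funpow_Suc_right)

lemma comp_word_add:
  "comp_word T \<eta> (n + k) x = comp_word T \<eta> n (comp_word T ((shift ^^ n) \<eta>) k x)"
proof (induction n arbitrary: \<eta>)
  case (Suc n)
  have "(shift ^^ n) (shift \<eta>) = shift ((shift ^^ n) \<eta>)"
    by (metis comp_apply funpow_Suc_right funpow_swap1)
  then show ?case
    using Suc[of "shift \<eta>"] by (simp add: comp_word_Suc funpow_Suc_right)
qed (simp add: comp_word_def)

lemma shift_in_Sigma_m: "\<eta> \<in> Sigma_m m \<Longrightarrow> shift \<eta> \<in> Sigma_m m"
  by (simp add: Sigma_m_def shift_def)

lemma funpow_shift_in_Sigma_m: "\<eta> \<in> Sigma_m m \<Longrightarrow> (shift ^^ k) \<eta> \<in> Sigma_m m"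
  by (simp add: Sigma_m_def funpow_shift)

lemma letter_in_range: "\<eta> \<in> Sigma_m m \<Longrightarrow> \<eta> k \<in> {1..m}"
  by (simp add: Sigma_m_def)

lemma compact_Sigma_m: "compact (Sigma_m m)"
proof -
  have "Sigma_m m = PiE UNIV (\<lambda>_. {1..m})"
    by (auto simp: Sigma_m_def PiE_def extensional_def)
  moreover have "compactin (product_topology (\<lambda>_. euclidean) UNIV) (PiE UNIV (\<lambda>_::nat. {1..m::nat}))"
    by (subst compactin_PiE) (auto intro: finite_imp_compact)
  ultimately show ?thesis
    by (simp add: euclidean_product_topology)
qed

lemma continuous_on_shift: "continuous_on S shift"
  unfolding shift_def
  by (intro continuous_on_coordinatewise_then_product continuous_on_subset[OF continuous_on_product_coordinates]) auto

lemma open_cylinder: "open {\<zeta>::nat \<Rightarrow> 'a::discrete_topology. \<forall>k<n. \<zeta> k = \<eta> k}"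
proof -
  have "{\<zeta>::nat \<Rightarrow> 'a. \<forall>k<n. \<zeta> k = \<eta> k} = (\<Inter>k<n. (\<lambda>\<zeta>. \<zeta> k) -` {\<eta> k})"
    by auto
  then show ?thesis
    by (auto intro!: open_vimage open_discrete)
qed

lemma closed_letter: "closed {\<zeta>::nat \<Rightarrow> 'a::discrete_topology. \<zeta> k \<in> A}"
proof -
  have "{\<zeta>::nat \<Rightarrow> 'a. \<zeta> k \<in> A} = (\<lambda>\<zeta>. \<zeta> k) -` A"
    by auto
  then show ?thesis
    by (auto intro!: closed_vimage simp: closed_def open_discrete)
qed

text \<open>\<open>nat \<Rightarrow> nat\<close> is not an instance of \<open>t2_space\<close>, so closedness does not follow
  from \<open>compact_Sigma_m\<close>.\<close>
lemma closed_Sigma_m: "closed (Sigma_m m)"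
proof -
  have "Sigma_m m = (\<Inter>k. {\<zeta>. \<zeta> k \<in> {1..m}})"
    by (auto simp: Sigma_m_def)
  then show ?thesis
    using closed_letter by (metis closed_INT)
qed

lemma disjoint_open_intervals_le:
  fixes a b c d :: real
  assumes "a < b" "c < d" "{a<..<b} \<inter> {c<..<d} = {}"
  shows "b \<le> c \<or> d \<le> a"
proof (rule ccontr)
  assume "\<not> (b \<le> c \<or> d \<le> a)"
  then have "(max a c + min b d) / 2 \<in> {a<..<b} \<inter> {c<..<d}"
    using assms(1,2) by (auto simp: max_def min_def)
  then show False
    using assms(3) by blast
qed

lemma birkhoff_avg_le:
  assumes "\<And>\<eta>. \<eta> \<in> Sigma_m m \<Longrightarrow> F \<eta> \<le> a + C * G \<eta>" "\<omega> \<in> Sigma_m m" "n > 0"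
  shows "birkhoff_avg n F \<omega> \<le> a + C * birkhoff_avg n G \<omega>"
proof -
  have "(\<Sum>i<n. F ((shift ^^ i) \<omega>)) \<le> (\<Sum>i<n. a + C * G ((shift ^^ i) \<omega>))"
    by (intro sum_mono assms(1) funpow_shift_in_Sigma_m assms(2))
  also have "\<dots> = real n * a + C * (\<Sum>i<n. G ((shift ^^ i) \<omega>))"
    by (simp add: sum.distrib sum_distrib_left)
  finally show ?thesis
    using assms(3) by (simp add: birkhoff_avg_def field_simps)
qed

lemma birkhoff_avg_uminus: "birkhoff_avg n (\<lambda>\<eta>. - F \<eta>) \<omega> = - birkhoff_avg n F \<omega>"
  by (simp add: birkhoff_avg_def sum_negf)

lemma limit_le_of_eventually_le_vanishing:
  fixes a b :: "nat \<Rightarrow> real"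
  assumes "a \<longlonglongrightarrow> L" "b \<longlonglongrightarrow> 0"
    and "\<And>\<epsilon>. \<epsilon> > 0 \<Longrightarrow> \<exists>C. eventually (\<lambda>j. a j \<le> h + \<epsilon> + C * b j) sequentially"
  shows "L \<le> h"
proof (rule field_le_epsilon)
  fix \<epsilon> :: real assume "\<epsilon> > 0"
  then obtain C where "eventually (\<lambda>j. a j \<le> h + \<epsilon> + C * b j) sequentially"
    using assms(3) by blast
  moreover have "(\<lambda>j. h + \<epsilon> + C * b j) \<longlonglongrightarrow> h + \<epsilon> + C * 0"
    by (intro tendsto_intros assms(2))
  ultimately show "L \<le> h + \<epsilon>"
    using tendsto_le[OF trivial_limit_sequentially _ assms(1)] by simp
qed

locale interval_ifs =
  fixes m :: nat and T T' :: "nat \<Rightarrow> real \<Rightarrow> real"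
  assumes maps_into: "\<And>i. i \<in> {1..m} \<Longrightarrow> T i ` {0..1} \<subseteq> {0..1}"
    and deriv: "\<And>i x. i \<in> {1..m} \<Longrightarrow> x \<in> {0..1} \<Longrightarrow>
                  (T i has_real_derivative T' i x) (at x within {0..1})"
    and C1: "\<And>i. i \<in> {1..m} \<Longrightarrow> continuous_on {0..1} (T' i)"
    and deriv_pos: "\<And>i x. i \<in> {1..m} \<Longrightarrow> x \<in> {0..1} \<Longrightarrow> T' i x > 0"
    and disjoint: "\<And>i j. i \<in> {1..m} \<Longrightarrow> j \<in> {1..m} \<Longrightarrow> i \<noteq> j \<Longrightarrow>
                  T i ` {0<..<1} \<inter> T j ` {0<..<1} = {}"
    and diam_unif: "\<forall>\<epsilon>>0. \<exists>N. \<forall>n\<ge>N. \<forall>\<eta>\<in>Sigma_m m.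
                  diameter (comp_word T \<eta> n ` {0..1}) < \<epsilon>"
    and fixes_pt: "\<And>i. i \<in> {1..m} \<Longrightarrow> T i (coding T (const_word i)) = coding T (const_word i)"
    and deriv_fix_le: "\<And>i. i \<in> {1..m} \<Longrightarrow> T' i (coding T (const_word i)) \<le> 1"
    and deriv_lt: "\<And>i x. i \<in> {1..m} \<Longrightarrow> x \<in> {0..1} \<Longrightarrow> x \<noteq> coding T (const_word i) \<Longrightarrow>
                  T' i x < 1"
begin

definition fixpt :: "nat \<Rightarrow> real" where
  "fixpt i = coding T (const_word i)"

definition indifferent :: "nat set" where
  "indifferent = {i \<in> {1..m}. T' i (fixpt i) = 1}"

lemma continuous_on_T: "i \<in> {1..m} \<Longrightarrow> continuous_on {0..1} (T i)"
  using deriv DERIV_continuous continuous_on_eq_continuous_within by blast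

lemma T_strict_mono:
  assumes i: "i \<in> {1..m}" and "x < y" "x \<in> {0..1}" "y \<in> {0..1}"
  shows "T i x < T i y"
proof -
  have "\<exists>z\<in>{x..y}. T i y - T i x = (\<lambda>h. T' i z * h) (y - x)"
  proof (rule mvt_very_simple)
    fix z assume "x \<le> z" "z \<le> y"
    then have z: "z \<in> {0..1}" using assms by auto
    have "(T i has_real_derivative T' i z) (at z within {x..y})"
      by (rule has_field_derivative_subset[OF deriv[OF i z]]) (use assms in auto)
    then show "(T i has_derivative (\<lambda>h. T' i z * h)) (at z within {x..y})"
      by (simp add: has_field_derivative_def)
  qed (use assms in simp)
  then obtain z where z: "z \<in> {x..y}" "T i y - T i x = T' i z * (y - x)"
    by auto
  have "T' i z > 0"
    using deriv_pos[OF i] z(1) assms by auto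
  then show ?thesis
    using z(2) \<open>x < y\<close> by (smt (verit) mult_pos_pos)
qed

lemma T_inj: "i \<in> {1..m} \<Longrightarrow> x \<in> {0..1} \<Longrightarrow> y \<in> {0..1} \<Longrightarrow> T i x = T i y \<Longrightarrow> x = y"
  by (metis T_strict_mono linorder_neq_iff order_less_irrefl)

lemma T'_le_1: "i \<in> {1..m} \<Longrightarrow> y \<in> {0..1} \<Longrightarrow> T' i y \<le> 1"
  using deriv_lt[of i y] deriv_fix_le[of i] by (cases "y = coding T (const_word i)") auto

lemma comp_word_in_unit: "\<eta> \<in> Sigma_m m \<Longrightarrow> y \<in> {0..1} \<Longrightarrow> comp_word T \<eta> n y \<in> {0..1}"
proof (induction n arbitrary: \<eta>)
  case (Suc n)
  then have "comp_word T (shift \<eta>) n y \<in> {0..1}"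
    using shift_in_Sigma_m by blast
  then show ?case
    using maps_into[OF letter_in_range[OF Suc.prems(1)]] by (force simp: comp_word_Suc)
qed (simp add: comp_word_def)

lemma comp_word_tail_in_image:
  assumes "\<eta> \<in> Sigma_m m" "n \<le> p"
  shows "comp_word T \<eta> p 0 \<in> comp_word T \<eta> n ` {0..1}"
proof -
  have "comp_word T \<eta> p 0 = comp_word T \<eta> n (comp_word T ((shift ^^ n) \<eta>) (p - n) 0)"
    using comp_word_add[of T \<eta> n "p - n" 0] assms(2) by simp
  then show ?thesis
    using comp_word_in_unit[OF funpow_shift_in_Sigma_m[OF assms(1)]] by auto
qed

lemma dist_le_diameter_comp_word:
  assumes "\<eta> \<in> Sigma_m m" "x \<in> comp_word T \<eta> n ` {0..1}" "y \<in> comp_word T \<eta> n ` {0..1}"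
  shows "dist x y \<le> diameter (comp_word T \<eta> n ` {0..1})"
proof (rule diameter_bounded_bound[OF _ assms(2,3)])
  show "bounded (comp_word T \<eta> n ` {0..1})"
    by (rule bounded_subset[of "{0..1}"]) (use comp_word_in_unit assms(1) in auto)
qed

lemma coding_limit: "\<eta> \<in> Sigma_m m \<Longrightarrow> (\<lambda>n. comp_word T \<eta> n 0) \<longlonglongrightarrow> coding T \<eta>"
proof -
  assume \<eta>: "\<eta> \<in> Sigma_m m"
  have "Cauchy (\<lambda>n. comp_word T \<eta> n 0)"
  proof (rule metric_CauchyI)
    fix e :: real assume "e > 0"
    then obtain N where N: "\<forall>n\<ge>N. diameter (comp_word T \<eta> n ` {0..1}) < e"
      using diam_unif \<eta> by blast
    have "dist (comp_word T \<eta> p 0) (comp_word T \<eta> q 0) < e" if "p \<ge> N" "q \<ge> N" for p q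
      using dist_le_diameter_comp_word[OF \<eta> comp_word_tail_in_image comp_word_tail_in_image,
          of "min p q" p q] N that \<eta> by (smt (verit) min.bounded_iff min.cobounded1 min.cobounded2)
    then show "\<exists>M. \<forall>p\<ge>M. \<forall>q\<ge>M. dist (comp_word T \<eta> p 0) (comp_word T \<eta> q 0) < e"
      by blast
  qed
  then show ?thesis
    unfolding coding_def by (simp add: Cauchy_convergent_iff convergent_LIMSEQ_iff)
qed

lemma coding_in_unit: "\<eta> \<in> Sigma_m m \<Longrightarrow> coding T \<eta> \<in> {0..1}"
  using closed_sequentially[OF closed_atLeastAtMost] coding_limit comp_word_in_unit
  by (metis atLeastAtMost_iff order_refl zero_le_one)

lemma coding_shift:
  assumes "\<eta> \<in> Sigma_m m"
  shows "coding T \<eta> = T (\<eta> 0) (coding T (shift \<eta>))"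
proof -
  have s: "shift \<eta> \<in> Sigma_m m"
    using assms shift_in_Sigma_m by blast
  have "(\<lambda>n. T (\<eta> 0) (comp_word T (shift \<eta>) n 0)) \<longlonglongrightarrow> T (\<eta> 0) (coding T (shift \<eta>))"
    by (rule continuous_on_tendsto_compose[OF continuous_on_T coding_limit[OF s] coding_in_unit[OF s]])
       (use comp_word_in_unit s letter_in_range assms in auto)
  moreover have "(\<lambda>n. T (\<eta> 0) (comp_word T (shift \<eta>) n 0)) \<longlonglongrightarrow> coding T \<eta>"
    using LIMSEQ_Suc[OF coding_limit[OF assms]] by (simp add: comp_word_Suc)
  ultimately show ?thesis
    using LIMSEQ_unique by metis
qed

lemma coding_comp_word:
  "\<eta> \<in> Sigma_m m \<Longrightarrow> coding T \<eta> = comp_word T \<eta> n (coding T ((shift ^^ n) \<eta>))"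
proof (induction n arbitrary: \<eta>)
  case (Suc n)
  have "(shift ^^ n) (shift \<eta>) = (shift ^^ Suc n) \<eta>"
    by (simp add: funpow_shift shift_def)
  then have "coding T (shift \<eta>) = comp_word T (shift \<eta>) n (coding T ((shift ^^ Suc n) \<eta>))"
    using Suc shift_in_Sigma_m by metis
  then show ?case
    using coding_shift[OF Suc.prems] by (simp add: comp_word_Suc)
qed (simp add: comp_word_def)

lemma continuous_on_coding: "continuous_on (Sigma_m m) (coding T)"
  unfolding continuous_on_topological
proof (intro ballI allI impI)
  fix \<eta> and B :: "real set"
  assume \<eta>: "\<eta> \<in> Sigma_m m" and "open B" "coding T \<eta> \<in> B"
  then obtain e where "e > 0" and e: "ball (coding T \<eta>) e \<subseteq> B"
    by (meson openE)
  then obtain N where N: "diameter (comp_word T \<eta> N ` {0..1}) < e"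
    using diam_unif \<eta> by blast
  define A where "A = {\<zeta>. \<forall>k<N. \<zeta> k = \<eta> k}"
  have "coding T \<zeta> \<in> B" if \<zeta>: "\<zeta> \<in> Sigma_m m" "\<zeta> \<in> A" for \<zeta>
  proof -
    have "comp_word T \<zeta> N = comp_word T \<eta> N"
      using \<zeta>(2) by (intro comp_word_cong) (simp add: A_def)
    then have "coding T \<zeta> \<in> comp_word T \<eta> N ` {0..1}"
      using coding_comp_word[OF \<zeta>(1), of N] coding_in_unit[OF funpow_shift_in_Sigma_m[OF \<zeta>(1)]]
      by auto
    moreover have "coding T \<eta> \<in> comp_word T \<eta> N ` {0..1}"
      using coding_comp_word[OF \<eta>, of N] coding_in_unit[OF funpow_shift_in_Sigma_m[OF \<eta>]] by auto
    ultimately have "dist (coding T \<eta>) (coding T \<zeta>) < e"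
      using dist_le_diameter_comp_word[OF \<eta>] N by fastforce
    then show ?thesis
      using e by auto
  qed
  moreover have "open A" "\<eta> \<in> A"
    using open_cylinder by (auto simp: A_def)
  ultimately show "\<exists>A. open A \<and> \<eta> \<in> A \<and> (\<forall>\<zeta>\<in>Sigma_m m. \<zeta> \<in> A \<longrightarrow> coding T \<zeta> \<in> B)"
    by blast
qed

lemma T_mono: "i \<in> {1..m} \<Longrightarrow> x \<le> y \<Longrightarrow> x \<in> {0..1} \<Longrightarrow> y \<in> {0..1} \<Longrightarrow> T i x \<le> T i y"
  using T_strict_mono by (metis order_le_less)

lemma open_interval_subset_image: "i \<in> {1..m} \<Longrightarrow> {T i 0<..<T i 1} \<subseteq> T i ` {0<..<1}"
proof
  fix w assume i: "i \<in> {1..m}" and w: "w \<in> {T i 0<..<T i 1}"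
  then obtain z where "0 \<le> z" "z \<le> 1" "T i z = w"
    using IVT'[of "T i" 0 w 1] continuous_on_T by fastforce
  moreover have "z \<noteq> 0" "z \<noteq> 1"
    using w \<open>T i z = w\<close> by auto
  ultimately show "w \<in> T i ` {0<..<1}"
    by auto
qed

lemma fixpt_in_unit: "i \<in> {1..m} \<Longrightarrow> fixpt i \<in> {0..1}"
  unfolding fixpt_def by (rule coding_in_unit) (simp add: Sigma_m_def const_word_def)

lemma T_fixpt: "i \<in> {1..m} \<Longrightarrow> T i (fixpt i) = fixpt i"
  using fixes_pt by (simp add: fixpt_def)

text \<open>The open intervals \<open>T i ` {0<..<1}\<close> and \<open>T j ` {0<..<1}\<close> are disjoint, so
  \<open>T j ` {0..1}\<close> can only reach \<open>fixpt i\<close> at a common endpoint, which would have to be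
  \<open>0\<close> or \<open>1\<close>; both are excluded because \<open>T j\<close> is strictly increasing into \<open>{0..1}\<close>.\<close>
lemma fixpt_notin_other_image:
  assumes i: "i \<in> {1..m}" and j: "j \<in> {1..m}" and "j \<noteq> i" and y: "y \<in> {0..1}"
  shows "T j y \<noteq> fixpt i"
proof
  assume eq: "T j y = fixpt i"
  define x where "x = fixpt i"
  have x: "x \<in> {0..1}" "T i x = x"
    using fixpt_in_unit[OF i] T_fixpt[OF i] by (auto simp: x_def)
  have ij: "T i 0 < T i 1" "T j 0 < T j 1"
    using T_strict_mono i j by auto
  have "{T i 0<..<T i 1} \<inter> {T j 0<..<T j 1} = {}"
    using open_interval_subset_image[OF i] open_interval_subset_image[OF j] disjoint[OF i j] \<open>j \<noteq> i\<close>
    by blast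
  then have "T i 1 \<le> T j 0 \<or> T j 1 \<le> T i 0"
    using disjoint_open_intervals_le ij by blast
  moreover have "T i 0 \<le> x" "x \<le> T i 1"
    using T_mono[OF i, of 0 x] T_mono[OF i, of x 1] x by auto
  moreover have "T j 0 \<le> x" "x \<le> T j 1" "0 \<le> T j 0" "T j 1 \<le> 1"
    using T_mono[OF j, of 0 y] T_mono[OF j, of y 1] y eq maps_into[OF j] by (auto simp: x_def image_subset_iff)
  ultimately consider "T i 1 = x" "T j 0 = x" | "T i 0 = x" "T j 1 = x"
    by linarith
  then show False
  proof cases
    case 1
    then have "x = 1"
      using T_inj[OF i, of 1 x] x by auto
    then show False
      using 1 ij \<open>T j 1 \<le> 1\<close> by linarith
  next
    case 2
    then have "x = 0"
      using T_inj[OF i, of 0 x] x by auto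
    then show False
      using 2 ij \<open>0 \<le> T j 0\<close> by linarith
  qed
qed

lemma coding_eq_fixpt_shift:
  assumes \<zeta>: "\<zeta> \<in> Sigma_m m" and i: "i \<in> {1..m}" and eq: "coding T \<zeta> = fixpt i"
  shows "\<zeta> 0 = i" "coding T (shift \<zeta>) = fixpt i"
proof -
  have s: "coding T (shift \<zeta>) \<in> {0..1}"
    using coding_in_unit shift_in_Sigma_m \<zeta> by blast
  have head: "T (\<zeta> 0) (coding T (shift \<zeta>)) = fixpt i"
    using coding_shift[OF \<zeta>] eq by simp
  then show "\<zeta> 0 = i"
    using fixpt_notin_other_image[OF i letter_in_range[OF \<zeta>] _ s] by blast
  then have "T i (coding T (shift \<zeta>)) = T i (fixpt i)"
    using head T_fixpt[OF i] by simp
  then show "coding T (shift \<zeta>) = fixpt i"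
    using T_inj[OF i s fixpt_in_unit[OF i]] by blast
qed

lemma coding_eq_fixpt:
  assumes "\<zeta> \<in> Sigma_m m" "i \<in> {1..m}" "coding T \<zeta> = fixpt i"
  shows "\<zeta> = const_word i"
proof
  fix k
  have "(shift ^^ k) \<zeta> \<in> Sigma_m m \<and> coding T ((shift ^^ k) \<zeta>) = fixpt i"
  proof (induction k)
    case (Suc k)
    then show ?case
      using shift_in_Sigma_m coding_eq_fixpt_shift(2)[OF _ assms(2)] by simp
  qed (use assms in simp)
  then have "((shift ^^ k) \<zeta>) 0 = i"
    using coding_eq_fixpt_shift(1)[OF _ assms(2)] by blast
  then show "\<zeta> k = const_word i k"
    by (simp add: funpow_shift const_word_def)
qed

lemma geom_pot_nonneg: "\<eta> \<in> Sigma_m m \<Longrightarrow> geom_pot T T' \<eta> \<ge> 0"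
  unfolding geom_pot_def
  using deriv_pos T'_le_1 letter_in_range coding_in_unit shift_in_Sigma_m by simp

lemma geom_pot_eq_0:
  assumes \<eta>: "\<eta> \<in> Sigma_m m" and "geom_pot T T' \<eta> = 0"
  shows "\<exists>i\<in>indifferent. \<eta> = const_word i"
proof -
  define i where "i = \<eta> 0"
  define y where "y = coding T (shift \<eta>)"
  have i: "i \<in> {1..m}" and y: "y \<in> {0..1}"
    using \<eta> letter_in_range coding_in_unit shift_in_Sigma_m by (auto simp: i_def y_def)
  have "ln (T' i y) = 0"
    using assms(2) by (simp add: geom_pot_def i_def y_def)
  then have T'_1: "T' i y = 1"
    using deriv_pos[OF i y] by simp
  then have y_fix: "y = fixpt i"
    using deriv_lt[OF i y] by (force simp: fixpt_def)
  then have "shift \<eta> = const_word i"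
    using coding_eq_fixpt[OF shift_in_Sigma_m[OF \<eta>] i] by (simp add: y_def)
  then have "\<eta> = const_word i"
    unfolding const_word_def shift_def fun_eq_iff by (metis i_def not0_implies_Suc)
  moreover have "i \<in> indifferent"
    using i T'_1 y_fix by (simp add: indifferent_def)
  ultimately show ?thesis
    by blast
qed

lemma continuous_on_geom_pot: "continuous_on (Sigma_m m) (geom_pot T T')"
proof -
  have "Sigma_m m = (\<Union>i\<in>{1..m}. Sigma_m m \<inter> {\<eta>. \<eta> 0 = i})"
    using letter_in_range by blast
  moreover have "continuous_on (Sigma_m m \<inter> {\<eta>. \<eta> 0 = i}) (geom_pot T T')" if i: "i \<in> {1..m}" for i
  proof -
    have "continuous_on (Sigma_m m \<inter> {\<eta>. \<eta> 0 = i}) (\<lambda>\<eta>. coding T (shift \<eta>))"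
      by (rule continuous_on_compose2[OF continuous_on_coding continuous_on_shift])
         (auto intro: shift_in_Sigma_m)
    then have "continuous_on (Sigma_m m \<inter> {\<eta>. \<eta> 0 = i}) (\<lambda>\<eta>. T' i (coding T (shift \<eta>)))"
      by (rule continuous_on_compose2[OF C1[OF i]]) (auto intro: coding_in_unit shift_in_Sigma_m)
    moreover have "T' i (coding T (shift \<eta>)) \<noteq> 0" if "\<eta> \<in> Sigma_m m" for \<eta>
      using deriv_pos[OF i coding_in_unit[OF shift_in_Sigma_m[OF that]]] by simp
    ultimately have "continuous_on (Sigma_m m \<inter> {\<eta>. \<eta> 0 = i}) (\<lambda>\<eta>. - ln (T' i (coding T (shift \<eta>))))"
      by (intro continuous_intros) auto
    then show ?thesis
      by (rule continuous_on_cong[THEN iffD1, rotated 2]) (auto simp: geom_pot_def)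
  qed
  moreover have "closed (Sigma_m m \<inter> {\<eta>. \<eta> 0 = i})" for i
    using closed_letter[of 0 "{i}"] by (intro closed_Int closed_Sigma_m) simp
  ultimately show ?thesis
    by (metis continuous_on_closed_Union finite_atLeastAtMost)
qed

text \<open>The geometric potential vanishes on \<open>Sigma_m m\<close> only at the indifferent fixed words,
  so it is bounded below by a positive constant on the compact set where \<open>F \<ge> \<epsilon>\<close>.\<close>
lemma le_epsilon_plus_geom_pot:
  assumes F: "continuous_on (Sigma_m m) F"
    and F_le: "\<And>i. i \<in> indifferent \<Longrightarrow> F (const_word i) \<le> 0" and "\<epsilon> > 0"
  shows "\<exists>C. \<forall>\<eta>\<in>Sigma_m m. F \<eta> \<le> \<epsilon> + C * geom_pot T T' \<eta>"
proof (cases "Sigma_m m \<inter> F -` {\<epsilon>..} = {}")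
  case True
  then show ?thesis
    using geom_pot_nonneg by (intro exI[of _ 0]) force
next
  case False
  define K where "K = Sigma_m m \<inter> F -` {\<epsilon>..}"
  have "compact (Sigma_m m \<inter> (Sigma_m m \<inter> F -` {\<epsilon>..}))"
    by (intro compact_Int_closed compact_Sigma_m continuous_closed_preimage[OF F closed_Sigma_m closed_atLeast])
  then have "compact K"
    by (simp add: K_def)
  moreover have "continuous_on K (geom_pot T T')"
    using continuous_on_geom_pot by (rule continuous_on_subset) (simp add: K_def)
  ultimately obtain \<eta>\<^sub>0 where \<eta>\<^sub>0: "\<eta>\<^sub>0 \<in> K" and min: "\<And>\<eta>. \<eta> \<in> K \<Longrightarrow> geom_pot T T' \<eta>\<^sub>0 \<le> geom_pot T T' \<eta>"
    using continuous_attains_inf[of K "geom_pot T T'"] False K_def by blast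
  obtain \<eta>\<^sub>1 where \<eta>\<^sub>1: "\<eta>\<^sub>1 \<in> Sigma_m m" and max: "\<And>\<eta>. \<eta> \<in> Sigma_m m \<Longrightarrow> F \<eta> \<le> F \<eta>\<^sub>1"
    using continuous_attains_sup[OF compact_Sigma_m _ F] \<eta>\<^sub>0 K_def by blast
  have "geom_pot T T' \<eta>\<^sub>0 \<noteq> 0"
  proof
    assume "geom_pot T T' \<eta>\<^sub>0 = 0"
    then obtain i where "i \<in> indifferent" "\<eta>\<^sub>0 = const_word i"
      using geom_pot_eq_0 \<eta>\<^sub>0 K_def by blast
    then show False
      using F_le \<eta>\<^sub>0 \<open>\<epsilon> > 0\<close> by (fastforce simp: K_def)
  qed
  then have g0: "geom_pot T T' \<eta>\<^sub>0 > 0"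
    using geom_pot_nonneg \<eta>\<^sub>0 K_def by (simp add: order_less_le)
  define C where "C = F \<eta>\<^sub>1 / geom_pot T T' \<eta>\<^sub>0"
  have C: "C \<ge> 0" "C * geom_pot T T' \<eta>\<^sub>0 = F \<eta>\<^sub>1"
    using g0 max[of \<eta>\<^sub>0] \<eta>\<^sub>0 \<open>\<epsilon> > 0\<close> by (auto simp: C_def K_def)
  have "F \<eta> \<le> \<epsilon> + C * geom_pot T T' \<eta>" if \<eta>: "\<eta> \<in> Sigma_m m" for \<eta>
  proof (cases "\<eta> \<in> K")
    case True
    then have "F \<eta>\<^sub>1 \<le> C * geom_pot T T' \<eta>"
      using C min mult_left_mono by metis
    then show ?thesis
      using max[OF \<eta>] \<open>\<epsilon> > 0\<close> by linarith
  next
    case False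
    then have "F \<eta> < \<epsilon>"
      using \<eta> by (auto simp: K_def)
    then show ?thesis
      using C(1) geom_pot_nonneg[OF \<eta>] by (smt (verit) mult_nonneg_nonneg)
  qed
  then show ?thesis
    by blast
qed

lemma lim_birkhoff_avg_le:
  assumes F: "continuous_on (Sigma_m m) F" and F_le: "\<And>i. i \<in> indifferent \<Longrightarrow> F (const_word i) \<le> h"
    and \<omega>: "\<omega> \<in> Sigma_m m" and pos: "eventually (\<lambda>j. s j > 0) sequentially"
    and g: "(\<lambda>j. birkhoff_avg (s j) (geom_pot T T') \<omega>) \<longlonglongrightarrow> 0"
    and L: "(\<lambda>j. birkhoff_avg (s j) F \<omega>) \<longlonglongrightarrow> L"
  shows "L \<le> h"
proof (rule limit_le_of_eventually_le_vanishing[OF L g])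
  fix \<epsilon> :: real assume "\<epsilon> > 0"
  moreover have "continuous_on (Sigma_m m) (\<lambda>\<eta>. F \<eta> - h)"
    by (intro continuous_intros F)
  ultimately obtain C where C: "\<And>\<eta>. \<eta> \<in> Sigma_m m \<Longrightarrow> F \<eta> - h \<le> \<epsilon> + C * geom_pot T T' \<eta>"
    using le_epsilon_plus_geom_pot[of "\<lambda>\<eta>. F \<eta> - h"] F_le by force
  have "eventually (\<lambda>j. birkhoff_avg (s j) F \<omega> \<le> h + \<epsilon> + C * birkhoff_avg (s j) (geom_pot T T') \<omega>) sequentially"
    using pos by eventually_elim (rule birkhoff_avg_le[OF _ \<omega>], use C in force)
  then show "\<exists>C. eventually (\<lambda>j. birkhoff_avg (s j) F \<omega> \<le> h + \<epsilon> + C * birkhoff_avg (s j) (geom_pot T T') \<omega>) sequentially"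
    by blast
qed

lemma lim_birkhoff_avg_mem:
  assumes f: "continuous_on (Sigma_m m) f" and ne: "indifferent \<noteq> {}"
    and \<omega>: "\<omega> \<in> Sigma_m m" and pos: "eventually (\<lambda>j. s j > 0) sequentially"
    and g: "(\<lambda>j. birkhoff_avg (s j) (geom_pot T T') \<omega>) \<longlonglongrightarrow> 0"
    and L: "(\<lambda>j. birkhoff_avg (s j) f \<omega>) \<longlonglongrightarrow> L"
  shows "L \<in> {Min ((\<lambda>i. f (const_word i)) ` indifferent)..Max ((\<lambda>i. f (const_word i)) ` indifferent)}"
proof -
  have fin: "finite indifferent"
    by (simp add: indifferent_def)
  have "L \<le> Max ((\<lambda>i. f (const_word i)) ` indifferent)"
    by (rule lim_birkhoff_avg_le[OF f _ \<omega> pos g L]) (simp add: fin)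
  moreover have "- L \<le> - Min ((\<lambda>i. f (const_word i)) ` indifferent)"
    by (rule lim_birkhoff_avg_le[where F = "\<lambda>\<eta>. - f \<eta>", OF _ _ \<omega> pos g])
       (use f fin in \<open>auto intro: continuous_intros tendsto_minus[OF L] simp: birkhoff_avg_uminus\<close>)
  ultimately show ?thesis
    by simp
qed

end

theorem lemma6:
  fixes m :: nat
    and T T' :: "nat \<Rightarrow> real \<Rightarrow> real"
    and f :: "(nat \<Rightarrow> nat) \<Rightarrow> real"
    and nj :: "nat \<Rightarrow> nat"
    and \<omega> :: "nat \<Rightarrow> nat"
  assumes m_pos: "m \<ge> 1"
    and maps_into: "\<And>i. i \<in> {1..m} \<Longrightarrow> T i ` {0..1} \<subseteq> {0..1}"
    and deriv: "\<And>i x. i \<in> {1..m} \<Longrightarrow> x \<in> {0..1} \<Longrightarrow>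
                  (T i has_real_derivative T' i x) (at x within {0..1})"
    and C1: "\<And>i. i \<in> {1..m} \<Longrightarrow> continuous_on {0..1} (T' i)"
    and deriv_pos: "\<And>i x. i \<in> {1..m} \<Longrightarrow> x \<in> {0..1} \<Longrightarrow> T' i x > 0"
    and disjoint: "\<And>i j. i \<in> {1..m} \<Longrightarrow> j \<in> {1..m} \<Longrightarrow> i \<noteq> j \<Longrightarrow>
                  T i ` {0<..<1} \<inter> T j ` {0<..<1} = {}"
    and diam_unif: "\<forall>\<epsilon>>0. \<exists>N. \<forall>n\<ge>N. \<forall>\<eta>\<in>Sigma_m m.
                  diameter (comp_word T \<eta> n ` {0..1}) < \<epsilon>"
    and fixes_pt: "\<And>i. i \<in> {1..m} \<Longrightarrow> T i (coding T (const_word i)) = coding T (const_word i)"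
    and deriv_fix_le: "\<And>i. i \<in> {1..m} \<Longrightarrow> T' i (coding T (const_word i)) \<le> 1"
    and deriv_lt: "\<And>i x. i \<in> {1..m} \<Longrightarrow> x \<in> {0..1} \<Longrightarrow> x \<noteq> coding T (const_word i) \<Longrightarrow>
                  T' i x < 1"
    and indiff_ne: "{i \<in> {1..m}. T' i (coding T (const_word i)) = 1} \<noteq> {}"
    and f_cont: "continuous_on (Sigma_m m) f"
    and nj_mono: "strict_mono nj"
    and nj_pos: "\<And>j. nj j > 0"
    and \<omega>_in: "\<omega> \<in> Sigma_m m"
  shows "((\<lambda>j. birkhoff_avg (nj j) (geom_pot T T') \<omega>) \<longlonglongrightarrow> 0 \<and>
           convergent (\<lambda>j. birkhoff_avg (nj j) f \<omega>)
           \<longrightarrow> lim (\<lambda>j. birkhoff_avg (nj j) f \<omega>) \<in>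
               {Min ((\<lambda>i. f (const_word i)) ` {i \<in> {1..m}. T' i (coding T (const_word i)) = 1})
                ..Max ((\<lambda>i. f (const_word i)) ` {i \<in> {1..m}. T' i (coding T (const_word i)) = 1})})
       \<and>
         ((\<lambda>n. birkhoff_avg n (geom_pot T T') \<omega>) \<longlonglongrightarrow> 0 \<and>
           convergent (\<lambda>n. birkhoff_avg n f \<omega>)
           \<longrightarrow> lim (\<lambda>n. birkhoff_avg n f \<omega>) \<in>
               {Min ((\<lambda>i. f (const_word i)) ` {i \<in> {1..m}. T' i (coding T (const_word i)) = 1})
                ..Max ((\<lambda>i. f (const_word i)) ` {i \<in> {1..m}. T' i (coding T (const_word i)) = 1})})"
proof -
  interpret interval_ifs m T T'
    using maps_into deriv C1 deriv_pos disjoint diam_unif fixes_pt deriv_fix_le deriv_lt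
    by unfold_locales auto
  have I: "indifferent = {i \<in> {1..m}. T' i (coding T (const_word i)) = 1}"
    by (simp add: indifferent_def fixpt_def)
  have mem: "lim (\<lambda>j. birkhoff_avg (s j) f \<omega>) \<in>
      {Min ((\<lambda>i. f (const_word i)) ` indifferent)..Max ((\<lambda>i. f (const_word i)) ` indifferent)}"
    if "eventually (\<lambda>j. s j > 0) sequentially"
      "(\<lambda>j. birkhoff_avg (s j) (geom_pot T T') \<omega>) \<longlonglongrightarrow> 0"
      "convergent (\<lambda>j. birkhoff_avg (s j) f \<omega>)" for s
    using lim_birkhoff_avg_mem[OF f_cont _ \<omega>_in that(1,2)] that(3) indiff_ne
    unfolding I convergent_LIMSEQ_iff by blast
  have "eventually (\<lambda>j. nj j > 0) sequentially" "eventually (\<lambda>n. n > 0) sequentially"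
    using nj_pos by (auto simp: eventually_sequentially intro: exI[of _ 1])
  then show ?thesis
    using mem[of nj] mem[of "\<lambda>n. n"] unfolding I by simp
qed

end
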